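(* For $x=(x_n)_{n\ge1}\in\ell^{1,1/2}$ define $$Q(x):=\sum_{n\ge1}n x_n^2+2\sum_{n\ge1}n x_n\sum_{k>n}x_k .$$ Then $Q$ is well defined (the series converge absolutely) on $\ell^{1,1/2}$, it is positive semidefinite, i.e. $Q(x)\ge0$ for all $x\in\ell^{1,1/2}$, it satisfies $|Q(x)|\le 2\|x\|_{\ell^{1,1/2}}^2$ for all $x\in\ell^{1,1/2}$, and $$\inf\{Q(x): x\in\ell^{1,1/2},\ \|x\|_{\ell^{1,1/2}}=1\}=0,$$ so $Q$ is not positive definite (in the sense of being bounded below by a positive multiple of $\|x\|^2_{\ell^{1,1/2}}$).
   Context: $\ell^{1,1/2}$ denotes the space of real sequences $x=(x_n)_{n\ge1}$ with $\|x\|_{\ell^{1,1/2}}:=\sum_{n\ge1}\sqrt n\,|x_n|<\infty$. *)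

theory Defs
  imports Complex_Main
begin

text \<open>A real sequence (x_n)_{n>=1} is represented by x :: nat => real; the value x 0 is
  ignored (it plays no role in any of the quantities below).\<close>

definition wnorm :: "(nat \<Rightarrow> real) \<Rightarrow> real" where
  "wnorm x = (\<Sum>m. sqrt (real (Suc m)) * \<bar>x (Suc m)\<bar>)"

definition ell112 :: "(nat \<Rightarrow> real) set" where
  "ell112 = {x. summable (\<lambda>m. sqrt (real (Suc m)) * \<bar>x (Suc m)\<bar>)}"

definition tail :: "(nat \<Rightarrow> real) \<Rightarrow> nat \<Rightarrow> real" where
  "tail x n = (\<Sum>j. x (n + Suc j))"

definition Qform :: "(nat \<Rightarrow> real) \<Rightarrow> real" where
  "Qform x = (\<Sum>m. real (Suc m) * (x (Suc m))\<^sup>2)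
           + 2 * (\<Sum>m. real (Suc m) * x (Suc m) * tail x (Suc m))"

end

theory Submission
  imports Defs
begin

(*
  Put w_k = sqrt k * |x_k|, A_n = sum_{k>n} w_k (so A_0 = ||x||) and T_n = sum_{k>n} x_k;
  then sqrt n * |T_n| <= A_n.  Hence |n x_n^2 + 2 n x_n T_n| <= w_n^2 + 2 w_n A_n
  = A_{n-1}^2 - A_n^2, which telescopes to |Q x| <= ||x||^2.  The same identity for T reads
  n x_n^2 + 2 n x_n T_n = n (T_{n-1}^2 - T_n^2), so by summation by parts the N-th partial
  sum of Q x equals sum_{m<N} T_m^2 - N T_N^2 >= -A_N^2, which tends to 0.  Finally
  x = c (e_{k+1} - e_{k+2}) has Q x = c^2 but ||x|| = c (sqrt (k+1) + sqrt (k+2)).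
*)

lemma summable_tail_terms: "summable (a :: nat \<Rightarrow> real) \<Longrightarrow> summable (\<lambda>j. a (n + Suc j))"
  using summable_ignore_initial_segment[of a "Suc n"] by (simp add: ac_simps)

lemma tail_unfold: "summable a \<Longrightarrow> tail a n = a (Suc n) + tail a (Suc n)"
  using suminf_split_head[OF summable_tail_terms, of a n] by (simp add: tail_def)

lemma tail_tendsto_zero:
  assumes "summable a"
  shows "tail a \<longlonglongrightarrow> 0"
proof (rule LIMSEQ_I)
  fix r :: real
  assume "0 < r"
  then obtain N where N: "\<forall>n\<ge>N. norm (\<Sum>i. a (i + n)) < r"
    using suminf_exist_split[OF _ assms] by blast
  have "tail a n = (\<Sum>i. a (i + Suc n))" for n
    unfolding tail_def by (simp add: ac_simps)
  then show "\<exists>N. \<forall>n\<ge>N. norm (tail a n - 0) < r"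
    using N le_SucI by (metis diff_zero)
qed

lemma abs_tail_le: "summable (\<lambda>k. \<bar>a k\<bar>) \<Longrightarrow> \<bar>tail a n\<bar> \<le> tail (\<lambda>k. \<bar>a k\<bar>) n"
  unfolding tail_def by (rule summable_rabs) (rule summable_tail_terms)

lemma tail_square_diff:
  assumes "summable a"
  shows "(tail a n)\<^sup>2 - (tail a (Suc n))\<^sup>2 = (a (Suc n))\<^sup>2 + 2 * a (Suc n) * tail a (Suc n)"
  by (subst tail_unfold[OF assms]) (simp add: power2_eq_square algebra_simps)

lemma sums_tail_square:
  assumes "summable a"
  shows "(\<lambda>n. (a (Suc n))\<^sup>2 + 2 * a (Suc n) * tail a (Suc n)) sums (tail a 0)\<^sup>2"
  using telescope_sums'[OF tendsto_power[OF tail_tendsto_zero[OF assms], of 2]]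
  by (simp add: tail_square_diff[OF assms])

lemma sum_weighted_diff:
  "(\<Sum>m<N. real (Suc m) * (f m - f (Suc m))) = (\<Sum>m<N. f m) - real N * f N"
  by (induction N) (simp_all add: algebra_simps)

(* The weight sqrt 0 = 0 discards the ignored entry x 0, so series over weighted x start at 0. *)
definition weighted :: "(nat \<Rightarrow> real) \<Rightarrow> nat \<Rightarrow> real" where
  "weighted x k = sqrt (real k) * \<bar>x k\<bar>"

lemma weighted_nonneg: "0 \<le> weighted x k"
  by (simp add: weighted_def)

lemma ell112_iff_summable_weighted: "x \<in> ell112 \<longleftrightarrow> summable (weighted x)"
  using summable_Suc_iff[of "weighted x"] by (simp add: ell112_def weighted_def)

lemma wnorm_eq_tail_weighted: "wnorm x = tail (weighted x) 0"
  by (simp add: wnorm_def tail_def weighted_def)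

lemma summable_abs_if_summable_weighted:
  assumes "summable (weighted x)"
  shows "summable (\<lambda>k. \<bar>x k\<bar>)"
proof (rule summable_comparison_test'[OF assms])
  fix k :: nat
  assume "1 \<le> k"
  then have "1 * \<bar>x k\<bar> \<le> sqrt (real k) * \<bar>x k\<bar>"
    by (intro mult_right_mono) auto
  then show "norm \<bar>x k\<bar> \<le> weighted x k"
    by (simp add: weighted_def)
qed

lemma sqrt_mult_abs_tail_le:
  assumes "summable (weighted x)"
  shows "sqrt (real n) * \<bar>tail x n\<bar> \<le> tail (weighted x) n"
proof -
  have sx: "summable (\<lambda>j. \<bar>x (n + Suc j)\<bar>)"
    by (rule summable_tail_terms[OF summable_abs_if_summable_weighted[OF assms]])
  have "sqrt (real n) * \<bar>tail x n\<bar> \<le> sqrt (real n) * tail (\<lambda>k. \<bar>x k\<bar>) n"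
    using abs_tail_le[OF summable_abs_if_summable_weighted[OF assms]]
    by (intro mult_left_mono) auto
  also have "\<dots> = (\<Sum>j. sqrt (real n) * \<bar>x (n + Suc j)\<bar>)"
    unfolding tail_def using suminf_mult[OF sx] by simp
  also have "\<dots> \<le> tail (weighted x) n"
    unfolding tail_def weighted_def
    by (intro suminf_le mult_right_mono summable_mult sx
          summable_tail_terms[OF assms[unfolded weighted_def]]) auto
  finally show ?thesis .
qed

definition Qform_term :: "(nat \<Rightarrow> real) \<Rightarrow> nat \<Rightarrow> real" where
  "Qform_term x m = real (Suc m) * (x (Suc m))\<^sup>2 + 2 * (real (Suc m) * x (Suc m) * tail x (Suc m))"

context
  fixes x :: "nat \<Rightarrow> real"
  assumes summable_weighted: "summable (weighted x)"
begin

lemma Qform_terms_abs_le: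
  "\<bar>real (Suc m) * (x (Suc m))\<^sup>2\<bar> + 2 * \<bar>real (Suc m) * x (Suc m) * tail x (Suc m)\<bar>
     \<le> (weighted x (Suc m))\<^sup>2 + 2 * weighted x (Suc m) * tail (weighted x) (Suc m)"
proof -
  have n: "real (Suc m) = sqrt (real (Suc m)) * sqrt (real (Suc m))"
    by simp
  have "\<bar>real (Suc m) * x (Suc m) * tail x (Suc m)\<bar>
      = weighted x (Suc m) * (sqrt (real (Suc m)) * \<bar>tail x (Suc m)\<bar>)"
    unfolding weighted_def by (subst n) (simp add: abs_mult)
  also have "\<dots> \<le> weighted x (Suc m) * tail (weighted x) (Suc m)"
    by (intro mult_left_mono sqrt_mult_abs_tail_le summable_weighted weighted_nonneg)
  finally show ?thesis
    by (simp add: weighted_def power_mult_distrib)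
qed

lemma summable_abs_Qform_terms:
  "summable (\<lambda>m. \<bar>real (Suc m) * (x (Suc m))\<^sup>2\<bar>)"
  "summable (\<lambda>m. \<bar>real (Suc m) * x (Suc m) * tail x (Suc m)\<bar>)"
proof -
  have majorant: "summable (\<lambda>m. (weighted x (Suc m))\<^sup>2
                    + 2 * weighted x (Suc m) * tail (weighted x) (Suc m))"
    using sums_summable[OF sums_tail_square[OF summable_weighted]] .
  show "summable (\<lambda>m. \<bar>real (Suc m) * (x (Suc m))\<^sup>2\<bar>)"
    by (rule summable_comparison_test'[OF majorant])
      (use Qform_terms_abs_le in \<open>fastforce intro: order_trans[rotated]\<close>)
  show "summable (\<lambda>m. \<bar>real (Suc m) * x (Suc m) * tail x (Suc m)\<bar>)"
    by (rule summable_comparison_test'[OF majorant])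
      (use Qform_terms_abs_le in \<open>fastforce intro: order_trans[rotated]\<close>)
qed

lemma Qform_sums: "Qform_term x sums Qform x"
  unfolding Qform_def Qform_term_def[abs_def]
  using summable_sums[OF summable_rabs_cancel[OF summable_abs_Qform_terms(1)]]
    sums_mult[OF summable_sums[OF summable_rabs_cancel[OF summable_abs_Qform_terms(2)]], of 2]
  by (rule sums_add)

lemma abs_Qform_le: "\<bar>Qform x\<bar> \<le> (wnorm x)\<^sup>2"
proof -
  let ?w = "\<lambda>m. (weighted x (Suc m))\<^sup>2 + 2 * weighted x (Suc m) * tail (weighted x) (Suc m)"
  have q_le: "\<bar>Qform_term x m\<bar> \<le> ?w m" for m
    using abs_triangle_ineq[of "real (Suc m) * (x (Suc m))\<^sup>2"
        "2 * (real (Suc m) * x (Suc m) * tail x (Suc m))"] Qform_terms_abs_le[of m]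
    unfolding Qform_term_def abs_mult by simp
  have w_sums: "?w sums (wnorm x)\<^sup>2"
    using sums_tail_square[OF summable_weighted] by (simp add: wnorm_eq_tail_weighted)
  have summable_abs_q: "summable (\<lambda>m. \<bar>Qform_term x m\<bar>)"
    using q_le by (intro summable_comparison_test'[OF sums_summable[OF w_sums]]) auto
  have "\<bar>Qform x\<bar> \<le> (\<Sum>m. \<bar>Qform_term x m\<bar>)"
    using summable_rabs[OF summable_abs_q] sums_unique[OF Qform_sums] by simp
  also have "\<dots> \<le> (wnorm x)\<^sup>2"
    using suminf_le[OF q_le summable_abs_q sums_summable[OF w_sums]] sums_unique[OF w_sums]
    by simp
  finally show ?thesis .
qed

lemma tendsto_real_mult_tail_square: "(\<lambda>N. real N * (tail x N)\<^sup>2) \<longlonglongrightarrow> 0"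
proof (rule tendsto_sandwich[OF _ _ tendsto_const])
  show "\<forall>\<^sub>F N in sequentially. 0 \<le> real N * (tail x N)\<^sup>2"
    by simp
  have "real N * (tail x N)\<^sup>2 \<le> (tail (weighted x) N)\<^sup>2" for N
    using power_mono[OF sqrt_mult_abs_tail_le[OF summable_weighted, of N], of 2]
    by (simp add: power_mult_distrib)
  then show "\<forall>\<^sub>F N in sequentially. real N * (tail x N)\<^sup>2 \<le> (tail (weighted x) N)\<^sup>2"
    by simp
  show "(\<lambda>N. (tail (weighted x) N)\<^sup>2) \<longlonglongrightarrow> 0"
    using tendsto_power[OF tail_tendsto_zero[OF summable_weighted], of 2] by simp
qed

lemma Qform_nonneg: "0 \<le> Qform x"
proof -
  have summable_x: "summable x"
    by (rule summable_rabs_cancel[OF summable_abs_if_summable_weighted[OF summable_weighted]])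
  have "Qform_term x m = real (Suc m) * ((tail x m)\<^sup>2 - (tail x (Suc m))\<^sup>2)" for m
    unfolding Qform_term_def tail_square_diff[OF summable_x]
    by (simp add: algebra_simps del: of_nat_Suc)
  then have partial_sums:
    "(\<Sum>m<N. Qform_term x m) = (\<Sum>m<N. (tail x m)\<^sup>2) - real N * (tail x N)\<^sup>2" for N
    using sum_weighted_diff[of "\<lambda>m. (tail x m)\<^sup>2" N] by (simp only:)
  have "(\<lambda>N. - (real N * (tail x N)\<^sup>2)) \<longlonglongrightarrow> 0"
    using tendsto_minus[OF tendsto_real_mult_tail_square] by simp
  moreover have "- (real N * (tail x N)\<^sup>2) \<le> (\<Sum>m<N. Qform_term x m)" for N
    unfolding partial_sums by (simp add: sum_nonneg)
  ultimately show ?thesis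
    using LIMSEQ_le[OF _ Qform_sums[unfolded sums_def]] by blast
qed

end

definition dipole :: "real \<Rightarrow> nat \<Rightarrow> nat \<Rightarrow> real" where
  "dipole c k n = (if n = Suc k then c else if n = Suc (Suc k) then - c else 0)"

lemma summable_weighted_dipole: "summable (weighted (dipole c k))"
  by (rule summable_finite[of "{Suc k, Suc (Suc k)}"]) (auto simp: weighted_def dipole_def)

lemma wnorm_dipole:
  "wnorm (dipole c k) = \<bar>c\<bar> * (sqrt (real (Suc k)) + sqrt (real (Suc (Suc k))))"
proof -
  have "(\<lambda>m. sqrt (real (Suc m)) * \<bar>dipole c k (Suc m)\<bar>)
      sums (\<Sum>m\<in>{k, Suc k}. sqrt (real (Suc m)) * \<bar>dipole c k (Suc m)\<bar>)"
    by (rule sums_finite) (auto simp: dipole_def)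
  then show ?thesis
    unfolding wnorm_def by (simp add: sums_iff dipole_def algebra_simps del: of_nat_Suc)
qed

lemma Qform_dipole: "Qform (dipole c k) = c\<^sup>2"
proof -
  have tail_Suc: "tail (dipole c k) (Suc k) = - c"
  proof -
    have "(\<lambda>j. dipole c k (Suc k + Suc j)) sums (\<Sum>j\<in>{0}. dipole c k (Suc k + Suc j))"
      by (rule sums_finite) (auto simp: dipole_def)
    then show ?thesis
      unfolding tail_def by (simp add: sums_iff dipole_def)
  qed
  have tail_Suc_Suc: "tail (dipole c k) (Suc (Suc k)) = 0"
    unfolding tail_def by (simp add: dipole_def)
  have squares: "(\<lambda>m. real (Suc m) * (dipole c k (Suc m))\<^sup>2)
      sums (\<Sum>m\<in>{k, Suc k}. real (Suc m) * (dipole c k (Suc m))\<^sup>2)"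
    by (rule sums_finite) (auto simp: dipole_def)
  have products: "(\<lambda>m. real (Suc m) * dipole c k (Suc m) * tail (dipole c k) (Suc m))
      sums (\<Sum>m\<in>{k, Suc k}. real (Suc m) * dipole c k (Suc m) * tail (dipole c k) (Suc m))"
    by (rule sums_finite) (auto simp: dipole_def)
  have "Qform (dipole c k) = (real (Suc k) * c\<^sup>2 + real (Suc (Suc k)) * c\<^sup>2)
        + 2 * (real (Suc k) * c * (- c))"
    unfolding Qform_def sums_unique[OF squares, symmetric] sums_unique[OF products, symmetric]
    by (simp add: dipole_def tail_Suc tail_Suc_Suc del: of_nat_Suc)
  also have "\<dots> = c\<^sup>2"
    by (simp add: algebra_simps power2_eq_square)
  finally show ?thesis .
qed

lemma exists_unit_Qform_le:
  "\<exists>x\<in>ell112. wnorm x = 1 \<and> Qform x \<le> inverse (real (Suc k))"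
proof -
  define s where "s = sqrt (real (Suc k)) + sqrt (real (Suc (Suc k)))"
  have sqrt_le: "sqrt (real (Suc k)) \<le> s" and sqrt_pos: "0 < sqrt (real (Suc k))"
    by (simp_all add: s_def)
  then have s_pos: "0 < s"
    by linarith
  have "(inverse s)\<^sup>2 \<le> (inverse (sqrt (real (Suc k))))\<^sup>2"
    using sqrt_le sqrt_pos s_pos by (intro power_mono le_imp_inverse_le) auto
  then have "Qform (dipole (inverse s) k) \<le> inverse (real (Suc k))"
    by (simp add: Qform_dipole power_inverse)
  moreover have "wnorm (dipole (inverse s) k) = 1"
    using s_pos unfolding wnorm_dipole s_def[symmetric] by simp
  ultimately show ?thesis
    using summable_weighted_dipole ell112_iff_summable_weighted by blast
qed

theorem proposition2p2:
  shows "(\<forall>x\<in>ell112.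
            summable (\<lambda>m. \<bar>real (Suc m) * (x (Suc m))\<^sup>2\<bar>)
          \<and> (\<forall>n\<ge>1. summable (\<lambda>j. \<bar>x (n + Suc j)\<bar>))
          \<and> summable (\<lambda>m. \<bar>real (Suc m) * x (Suc m) * tail x (Suc m)\<bar>))
       \<and> (\<forall>x\<in>ell112. Qform x \<ge> 0)
       \<and> (\<forall>x\<in>ell112. \<bar>Qform x\<bar> \<le> 2 * (wnorm x)\<^sup>2)
       \<and> Inf (Qform ` {x\<in>ell112. wnorm x = 1}) = 0"
proof (intro conjI ballI allI impI)
  fix x
  assume "x \<in> ell112"
  then have w: "summable (weighted x)"
    by (simp add: ell112_iff_summable_weighted)
  show "summable (\<lambda>m. \<bar>real (Suc m) * (x (Suc m))\<^sup>2\<bar>)"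
    "summable (\<lambda>m. \<bar>real (Suc m) * x (Suc m) * tail x (Suc m)\<bar>)"
    by (fact summable_abs_Qform_terms[OF w])+
  show "0 \<le> Qform x"
    by (fact Qform_nonneg[OF w])
  show "summable (\<lambda>j. \<bar>x (n + Suc j)\<bar>)" for n
    by (fact summable_tail_terms[OF summable_abs_if_summable_weighted[OF w]])
  show "\<bar>Qform x\<bar> \<le> 2 * (wnorm x)\<^sup>2"
    using abs_Qform_le[OF w] by simp
next
  let ?S = "Qform ` {x\<in>ell112. wnorm x = 1}"
  have lower: "q \<in> ?S \<Longrightarrow> 0 \<le> q" for q
    using Qform_nonneg by (auto simp: ell112_iff_summable_weighted)
  have upper: "Inf ?S \<le> inverse (real (Suc k))" for k
  proof -
    obtain x where x: "x \<in> ell112" "wnorm x = 1" and Qx: "Qform x \<le> inverse (real (Suc k))"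
      using exists_unit_Qform_le by blast
    have "Inf ?S \<le> Qform x"
      using x lower by (intro cInf_lower bdd_belowI) auto
    with Qx show ?thesis
      by linarith
  qed
  have "?S \<noteq> {}"
    using exists_unit_Qform_le by blast
  then have "0 \<le> Inf ?S"
    using lower by (rule cInf_greatest)
  moreover have "Inf ?S \<le> 0"
    using upper by (intro LIMSEQ_le_const[OF LIMSEQ_inverse_real_of_nat]) blast
  ultimately show "Inf ?S = 0"
    by simp
qed

end
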